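(* For $i\in\{1,\dots,d\}$, $r\in\mathbb{N}$ and $\boldsymbol{x}\in\mathcal{S}$, let $$R_{i,r}(\boldsymbol{x}) := r^{1/2}\sum_{\boldsymbol{k},\boldsymbol{\ell}\in\mathbb{N}_0^d\cap r\mathcal{S}}\big((k_i\wedge\ell_i)/r-x_i\big)P_{\boldsymbol{k},r}(\boldsymbol{x})P_{\boldsymbol{\ell},r}(\boldsymbol{x}).$$ Then $\sup_{1\le i\le d}\sup_{r\in\mathbb{N}}\sup_{\boldsymbol{x}\in\mathcal{S}}|R_{i,r}(\boldsymbol{x})|\le1$, and for every $\boldsymbol{x}\in\mathrm{Int}(\mathcal{S})$ and every $i$, $$R_{i,r}(\boldsymbol{x}) = -\sqrt{\frac{x_i(1-x_i)}{\pi}}+\mathrm{o}_{\boldsymbol{x}}(1),\quad\text{as } r\to\infty.$$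
   Context: Let $d\ge1$, $\|\boldsymbol{x}\|_1=\sum_i|x_i|$, $\mathcal{S}:=\{\boldsymbol{x}\in[0,1]^d:\|\boldsymbol{x}\|_1\le1\}$, $\mathrm{Int}(\mathcal{S}):=\{\boldsymbol{x}\in(0,1)^d:\|\boldsymbol{x}\|_1<1\}$. For $r\in\mathbb{N}$, $\mathbb{N}_0^d\cap r\mathcal{S}$ is the set of $\boldsymbol{k}\in\mathbb{N}_0^d$ with $\|\boldsymbol{k}\|_1\le r$, and $P_{\boldsymbol{k},r}(\boldsymbol{x}) := \frac{r!}{(r-\|\boldsymbol{k}\|_1)!\prod_i k_i!}(1-\|\boldsymbol{x}\|_1)^{r-\|\boldsymbol{k}\|_1}\prod_i x_i^{k_i}$. $a\wedge b=\min(a,b)$. $\mathrm{o}_{\boldsymbol{x}}(1)$ denotes a term tending to $0$ at a rate that may depend on $\boldsymbol{x}$. *)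

theory Defs
  imports "HOL-Analysis.Analysis"
begin

text \<open>Points of R^d are functions nat => real, only the coordinates 0..<d matter
  (coordinate i of the paper is index i-1 here). Multi-indices are functions nat => nat
  vanishing outside {..<d}.\<close>

definition l1norm :: "nat \<Rightarrow> (nat \<Rightarrow> real) \<Rightarrow> real" where
  "l1norm d x = (\<Sum>i<d. \<bar>x i\<bar>)"

definition stdSimplex :: "nat \<Rightarrow> (nat \<Rightarrow> real) set" where
  "stdSimplex d = {x. (\<forall>i<d. 0 \<le> x i \<and> x i \<le> 1) \<and> (\<forall>i\<ge>d. x i = 0) \<and> l1norm d x \<le> 1}"

definition simplexInt :: "nat \<Rightarrow> (nat \<Rightarrow> real) set" where
  "simplexInt d = {x. (\<forall>i<d. 0 < x i \<and> x i < 1) \<and> (\<forall>i\<ge>d. x i = 0) \<and> l1norm d x < 1}"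

definition lattice_pts :: "nat \<Rightarrow> nat \<Rightarrow> (nat \<Rightarrow> nat) set" where
  "lattice_pts d r = {k. (\<forall>i\<ge>d. k i = 0) \<and> (\<Sum>i<d. k i) \<le> r}"

definition multinom :: "nat \<Rightarrow> nat \<Rightarrow> (nat \<Rightarrow> nat) \<Rightarrow> (nat \<Rightarrow> real) \<Rightarrow> real" where
  "multinom d r k x =
     fact r / (fact (r - (\<Sum>i<d. k i)) * (\<Prod>i<d. fact (k i)))
     * (1 - l1norm d x) ^ (r - (\<Sum>i<d. k i)) * (\<Prod>i<d. x i ^ k i)"

definition Rfun :: "nat \<Rightarrow> nat \<Rightarrow> nat \<Rightarrow> (nat \<Rightarrow> real) \<Rightarrow> real" where
  "Rfun d i r x = sqrt (real r) *
     (\<Sum>k\<in>lattice_pts d r. \<Sum>l\<in>lattice_pts d r.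
        (real (min (k i) (l i)) / real r - x i) * multinom d r k x * multinom d r l x)"

end

theory Submission
  imports Defs "HOL-Probability.Probability_Mass_Function"
begin

(* Only the i-th marginal of the multinomial weights enters R_{i,r}; it is Binomial(r, p) with
   p = x_i. For independent K, L ~ Binomial(r, p), min(K, L) = (K + L - |K - L|) / 2 turns R_{i,r}
   into -E|K - L| / (2 sqrt r), and E|K - L| <= sqrt (E (K - L)^2) = sqrt (2 r p (1 - p)) gives the
   uniform bound.
   For the asymptotics, K - L is a sum of r independent steps, each of which is a fair lazy step
   (+1 or -1 with probability 1/4 each, else 0) with probability 4 p (1 - p) and 0 otherwise. So
   K - L is the fair lazy walk W run for N ~ Binomial(r, 4 p (1 - p)) steps, and
   E|W_n| = n (1/2)_n / n! ~ sqrt (n / pi). As N / r concentrates at 4 p (1 - p),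
   E|K - L| / sqrt r tends to sqrt (4 p (1 - p) / pi). *)

lemma expectation_bind_pmf_finite:
  fixes f :: "'b \<Rightarrow> real"
  assumes M: "finite (set_pmf M)" and N: "\<And>x. x \<in> set_pmf M \<Longrightarrow> finite (set_pmf (N x))"
  shows "measure_pmf.expectation (bind_pmf M N) f =
         measure_pmf.expectation M (\<lambda>x. measure_pmf.expectation (N x) f)"
proof -
  define A where "A = (\<Union>x\<in>set_pmf M. set_pmf (N x))"
  have A: "finite A" using M N unfolding A_def by auto
  have "measure_pmf.expectation (bind_pmf M N) f = (\<Sum>y\<in>A. f y * pmf (bind_pmf M N) y)"
    by (rule integral_measure_pmf_real) (use A in \<open>auto simp: A_def\<close>)
  also have "\<dots> = (\<Sum>y\<in>A. f y * (\<Sum>x\<in>set_pmf M. pmf (N x) y * pmf M x))"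
    using M by (simp add: pmf_bind integral_measure_pmf_real)
  also have "\<dots> = (\<Sum>x\<in>set_pmf M. (\<Sum>y\<in>A. f y * pmf (N x) y) * pmf M x)"
    by (simp add: sum_distrib_left sum_distrib_right sum.swap[of _ A] mult_ac)
  also have "\<dots> = (\<Sum>x\<in>set_pmf M. measure_pmf.expectation (N x) f * pmf M x)"
    by (intro sum.cong refl arg_cong2[where f="(*)"] integral_measure_pmf_real[symmetric])
       (use A in \<open>auto simp: A_def\<close>)
  also have "\<dots> = measure_pmf.expectation M (\<lambda>x. measure_pmf.expectation (N x) f)"
    by (rule integral_measure_pmf_real[symmetric]) (use M in auto)
  finally show ?thesis .
qed

lemma abs_expectation_le_const_pmf:
  fixes M :: "'a pmf" and f :: "'a \<Rightarrow> real"
  assumes f: "integrable M f" and c: "\<And>x. x \<in> set_pmf M \<Longrightarrow> \<bar>f x\<bar> \<le> c"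
  shows "\<bar>measure_pmf.expectation M f\<bar> \<le> c"
proof -
  have "measure_pmf.expectation M f \<le> c"
    by (intro measure_pmf.integral_le_const f) (auto simp: AE_measure_pmf_iff abs_le_iff dest: c)
  moreover have "measure_pmf.expectation M (\<lambda>x. - f x) \<le> c"
    by (intro measure_pmf.integral_le_const) (auto simp: f AE_measure_pmf_iff abs_le_iff dest: c)
  ultimately show ?thesis by simp
qed

lemma (in prob_space) expectation_abs_le_sqrt_expectation_square:
  fixes X :: "'a \<Rightarrow> real"
  assumes "integrable M X" and "integrable M (\<lambda>x. (X x)\<^sup>2)"
  shows "expectation (\<lambda>x. \<bar>X x\<bar>) \<le> sqrt (expectation (\<lambda>x. (X x)\<^sup>2))"
proof (rule real_le_rsqrt)
  have "0 \<le> variance (\<lambda>x. \<bar>X x\<bar>)" by (rule variance_positive)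
  also have "\<dots> = expectation (\<lambda>x. (X x)\<^sup>2) - (expectation (\<lambda>x. \<bar>X x\<bar>))\<^sup>2"
    using assms by (subst variance_eq) auto
  finally show "(expectation (\<lambda>x. \<bar>X x\<bar>))\<^sup>2 \<le> expectation (\<lambda>x. (X x)\<^sup>2)" by simp
qed

lemma four_mult_mult_one_minus_in_unit:
  assumes p: "p \<in> {0..1::real}"
  shows "4 * p * (1 - p) \<in> {0..1}"
proof -
  have "4 * p * (1 - p) = 1 - (2 * p - 1)\<^sup>2" by (simp add: power2_eq_square algebra_simps)
  moreover have "(2 * p - 1)\<^sup>2 \<le> 1" using p by (subst abs_square_le_1) auto
  ultimately show ?thesis using p by auto
qed

lemma set_pmf_binomial_pmf_subset: "p \<in> {0..1} \<Longrightarrow> set_pmf (binomial_pmf n p) \<subseteq> {..n}"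
  by (auto simp: set_pmf_binomial_eq)

lemma expectation_binomial_pmf_Suc:
  fixes f :: "nat \<Rightarrow> real"
  assumes p: "p \<in> {0..1}"
  shows "measure_pmf.expectation (binomial_pmf (Suc n) p) f =
     p * measure_pmf.expectation (binomial_pmf n p) (\<lambda>k. f (Suc k)) +
     (1 - p) * measure_pmf.expectation (binomial_pmf n p) f"
  unfolding binomial_pmf_Suc[OF p] using p
  by (subst expectation_bind_pmf_finite)
     (auto simp: expectation_bind_pmf_finite finite_set_pmf_binomial_pmf)

lemma expectation_binomial_pmf_mean:
  assumes p: "p \<in> {0..1}"
  shows "measure_pmf.expectation (binomial_pmf n p) real = n * p"
  by (induction n) (use p in \<open>simp_all add: binomial_pmf_0 expectation_binomial_pmf_Suc
      algebra_simps\<close>)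

lemma expectation_binomial_pmf_square_deviation:
  assumes p: "p \<in> {0..1}"
  shows "measure_pmf.expectation (binomial_pmf n p) (\<lambda>k. (real k - n * p)\<^sup>2) = n * p * (1 - p)"
proof (induction n)
  case 0 then show ?case using p by (simp add: binomial_pmf_0)
next
  case (Suc n)
  let ?E = "measure_pmf.expectation (binomial_pmf n p)"
  have "?E (\<lambda>k. (real (Suc k) - Suc n * p)\<^sup>2) =
        ?E (\<lambda>k. (real k - n * p)\<^sup>2) + 2 * (1 - p) * ?E (\<lambda>k. real k - n * p) + (1 - p)\<^sup>2"
    using p by (simp add: power2_eq_square algebra_simps)
  moreover have "?E (\<lambda>k. (real k - Suc n * p)\<^sup>2) =
        ?E (\<lambda>k. (real k - n * p)\<^sup>2) - 2 * p * ?E (\<lambda>k. real k - n * p) + p\<^sup>2"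
    using p by (simp add: power2_eq_square algebra_simps)
  ultimately show ?case
    using p Suc.IH by (simp add: expectation_binomial_pmf_Suc power2_eq_square algebra_simps)
qed

definition bernoulli_diff_pmf :: "real \<Rightarrow> int pmf" where
  "bernoulli_diff_pmf p =
     do {a \<leftarrow> bernoulli_pmf p; b \<leftarrow> bernoulli_pmf p; return_pmf (of_bool a - of_bool b)}"

definition binomial_diff_pmf :: "nat \<Rightarrow> real \<Rightarrow> int pmf" where
  "binomial_diff_pmf n p =
     do {k \<leftarrow> binomial_pmf n p; l \<leftarrow> binomial_pmf n p; return_pmf (int k - int l)}"

lemma pmf_bernoulli_diff_pmf:
  assumes p: "p \<in> {0..1}"
  shows "pmf (bernoulli_diff_pmf p) z =
           (if z = 0 then p\<^sup>2 + (1 - p)\<^sup>2 else if z = 1 \<or> z = -1 then p * (1 - p) else 0)"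
  using p by (auto simp: bernoulli_diff_pmf_def pmf_bind indicator_def power2_eq_square)

lemma set_pmf_bernoulli_diff_pmf_subset:
  assumes p: "p \<in> {0..1}"
  shows "set_pmf (bernoulli_diff_pmf p) \<subseteq> {-1, 0, 1}"
  using p by (auto simp: set_pmf_iff pmf_bernoulli_diff_pmf split: if_splits)

lemma finite_set_pmf_bernoulli_diff_pmf: "p \<in> {0..1} \<Longrightarrow> finite (set_pmf (bernoulli_diff_pmf p))"
  by (rule finite_subset[OF set_pmf_bernoulli_diff_pmf_subset]) auto

lemma expectation_bernoulli_diff_pmf:
  fixes f :: "int \<Rightarrow> real"
  assumes p: "p \<in> {0..1}"
  shows "measure_pmf.expectation (bernoulli_diff_pmf p) f =
           (p\<^sup>2 + (1 - p)\<^sup>2) * f 0 + p * (1 - p) * (f 1 + f (-1))"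
  using p set_pmf_bernoulli_diff_pmf_subset[OF p]
  by (subst integral_measure_pmf_real[of "{-1, 0, 1}"])
     (auto simp: pmf_bernoulli_diff_pmf algebra_simps)

lemma binomial_diff_pmf_0: "p \<in> {0..1} \<Longrightarrow> binomial_diff_pmf 0 p = return_pmf 0"
  by (simp add: binomial_diff_pmf_def binomial_pmf_0 bind_return_pmf)

lemma binomial_diff_pmf_Suc:
  assumes p: "p \<in> {0..1}"
  shows "binomial_diff_pmf (Suc n) p =
           do {z \<leftarrow> binomial_diff_pmf n p; s \<leftarrow> bernoulli_diff_pmf p; return_pmf (z + s)}"
proof -
  define B where "B = binomial_pmf n p"
  define E where "E = bernoulli_pmf p"
  have "binomial_diff_pmf (Suc n) p =
    do {a \<leftarrow> E; k \<leftarrow> B; b \<leftarrow> E; l \<leftarrow> B; return_pmf (int (of_bool a + k) - int (of_bool b + l))}"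
    unfolding binomial_diff_pmf_def binomial_pmf_Suc[OF p] B_def E_def
    by (simp add: bind_assoc_pmf bind_return_pmf of_bool_def)
  also have "\<dots> =
    do {k \<leftarrow> B; l \<leftarrow> B; a \<leftarrow> E; b \<leftarrow> E; return_pmf (int (of_bool a + k) - int (of_bool b + l))}"
    by (subst bind_commute_pmf, intro bind_pmf_cong refl,
        subst bind_commute_pmf, intro bind_pmf_cong refl, rule bind_commute_pmf)
  also have "\<dots> = do {z \<leftarrow> binomial_diff_pmf n p; s \<leftarrow> bernoulli_diff_pmf p; return_pmf (z + s)}"
    unfolding binomial_diff_pmf_def bernoulli_diff_pmf_def B_def[symmetric] E_def[symmetric]
    by (simp add: bind_assoc_pmf bind_return_pmf algebra_simps)
  finally show ?thesis .
qed

lemma finite_set_pmf_binomial_diff_pmf: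
  "p \<in> {0..1} \<Longrightarrow> finite (set_pmf (binomial_diff_pmf n p))"
  by (induction n)
     (auto simp: binomial_diff_pmf_0 binomial_diff_pmf_Suc finite_set_pmf_bernoulli_diff_pmf)

lemma integrable_binomial_diff_pmf [simp]:
  fixes f :: "int \<Rightarrow> real"
  shows "p \<in> {0..1} \<Longrightarrow> integrable (binomial_diff_pmf n p) f"
  by (rule integrable_measure_pmf_finite) (rule finite_set_pmf_binomial_diff_pmf)

lemma expectation_binomial_diff_pmf_Suc:
  fixes f :: "int \<Rightarrow> real"
  assumes p: "p \<in> {0..1}"
  shows "measure_pmf.expectation (binomial_diff_pmf (Suc n) p) f =
     measure_pmf.expectation (binomial_diff_pmf n p)
       (\<lambda>z. measure_pmf.expectation (bernoulli_diff_pmf p) (\<lambda>s. f (z + s)))"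
  unfolding binomial_diff_pmf_Suc[OF p]
  using finite_set_pmf_binomial_diff_pmf[OF p] finite_set_pmf_bernoulli_diff_pmf[OF p]
  by (subst expectation_bind_pmf_finite) (auto simp: expectation_bind_pmf_finite)

lemma expectation_binomial_diff_pmf:
  fixes f :: "int \<Rightarrow> real"
  assumes p: "p \<in> {0..1}"
  shows "measure_pmf.expectation (binomial_diff_pmf n p) f =
     measure_pmf.expectation (binomial_pmf n p)
       (\<lambda>k. measure_pmf.expectation (binomial_pmf n p) (\<lambda>l. f (int k - int l)))"
  unfolding binomial_diff_pmf_def using p
  by (subst expectation_bind_pmf_finite)
     (auto simp: expectation_bind_pmf_finite finite_set_pmf_binomial_pmf)

lemma expectation_binomial_diff_pmf_square:
  assumes p: "p \<in> {0..1}"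
  shows "measure_pmf.expectation (binomial_diff_pmf n p) (\<lambda>z. (real_of_int z)\<^sup>2) =
           2 * p * (1 - p) * n"
proof (induction n)
  case 0 then show ?case using p by (simp add: binomial_diff_pmf_0)
next
  case (Suc n)
  have step: "measure_pmf.expectation (bernoulli_diff_pmf p) (\<lambda>s. (real_of_int (z + s))\<^sup>2) =
              (real_of_int z)\<^sup>2 + 2 * p * (1 - p)" for z
    using p by (simp add: expectation_bernoulli_diff_pmf power2_eq_square algebra_simps)
  show ?case
    unfolding expectation_binomial_diff_pmf_Suc[OF p] step
    using p Suc.IH by (simp add: algebra_simps)
qed

lemma expectation_binomial_diff_pmf_abs_le:
  assumes p: "p \<in> {0..1}"
  shows "measure_pmf.expectation (binomial_diff_pmf n p) (\<lambda>z. \<bar>real_of_int z\<bar>) \<le>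
           sqrt (n / 2)"
proof -
  have "measure_pmf.expectation (binomial_diff_pmf n p) (\<lambda>z. \<bar>real_of_int z\<bar>) \<le>
        sqrt (2 * p * (1 - p) * n)"
    using p measure_pmf.expectation_abs_le_sqrt_expectation_square[of "binomial_diff_pmf n p" real_of_int]
    by (simp add: expectation_binomial_diff_pmf_square)
  also have "\<dots> \<le> sqrt (n / 2)"
  proof (intro real_sqrt_le_mono)
    have "4 * p * (1 - p) * n \<le> 1 * real n"
      using four_mult_mult_one_minus_in_unit[OF p] by (intro mult_right_mono) auto
    then show "2 * p * (1 - p) * n \<le> n / 2" by simp
  qed
  finally show ?thesis .
qed

lemma expectation_binomial_diff_pmf_abs_Suc:
  assumes p: "p \<in> {0..1}"
  shows "measure_pmf.expectation (binomial_diff_pmf (Suc n) p) (\<lambda>z. \<bar>real_of_int z\<bar>) =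
         measure_pmf.expectation (binomial_diff_pmf n p) (\<lambda>z. \<bar>real_of_int z\<bar>) +
         2 * p * (1 - p) * pmf (binomial_diff_pmf n p) 0"
proof -
  have step: "measure_pmf.expectation (bernoulli_diff_pmf p) (\<lambda>s. \<bar>real_of_int (z + s)\<bar>) =
              \<bar>real_of_int z\<bar> + 2 * p * (1 - p) * indicator {0} z" for z
    \<comment> \<open>away from the origin the symmetric step leaves the absolute value unchanged on average\<close>
    using p by (cases "z = 0"; cases "z > 0")
      (simp_all add: expectation_bernoulli_diff_pmf power2_eq_square algebra_simps)
  have "measure_pmf.expectation (binomial_diff_pmf n p) (indicator {0}) =
        pmf (binomial_diff_pmf n p) 0"
    by (simp add: measure_pmf_single)
  then show ?thesis
    unfolding expectation_binomial_diff_pmf_Suc[OF p] step using p by simp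
qed

lemma bernoulli_diff_pmf_mixture:
  assumes p: "p \<in> {0..1}"
  shows "bernoulli_diff_pmf p =
           do {c \<leftarrow> bernoulli_pmf (4 * p * (1 - p));
               if c then bernoulli_diff_pmf (1/2) else return_pmf 0}"
proof (rule pmf_eqI)
  fix z :: int
  show "pmf (bernoulli_diff_pmf p) z = pmf (do {c \<leftarrow> bernoulli_pmf (4 * p * (1 - p));
               if c then bernoulli_diff_pmf (1/2) else return_pmf 0}) z"
    using p four_mult_mult_one_minus_in_unit[OF p]
    by (simp add: pmf_bind pmf_bernoulli_diff_pmf indicator_def power2_eq_square)
       (auto simp: algebra_simps)
qed

lemma binomial_diff_pmf_mixture:
  assumes p: "p \<in> {0..1}"
  shows "binomial_diff_pmf n p =
           binomial_pmf n (4 * p * (1 - p)) \<bind> (\<lambda>m. binomial_diff_pmf m (1/2))"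
proof (induction n)
  case 0
  then show ?case using p four_mult_mult_one_minus_in_unit[OF p]
    by (simp add: binomial_pmf_0 binomial_diff_pmf_0 bind_return_pmf)
next
  case (Suc n)
  define q where "q = 4 * p * (1 - p)"
  have q: "q \<in> {0..1}" using four_mult_mult_one_minus_in_unit[OF p] by (simp add: q_def)
  define B where "B = binomial_pmf n q"
  define E where "E = bernoulli_pmf q"
  define W where "W m = binomial_diff_pmf m (1/2)" for m
  define step where "step c = (\<lambda>z. (if c then bernoulli_diff_pmf (1/2) else return_pmf 0) \<bind>
                                       (\<lambda>s. return_pmf (z + s)))" for c
  have "binomial_diff_pmf (Suc n) p = B \<bind> (\<lambda>m. W m \<bind> (\<lambda>z. E \<bind> (\<lambda>c. step c z)))"
    unfolding binomial_diff_pmf_Suc[OF p] Suc bernoulli_diff_pmf_mixture[OF p]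
    by (simp add: B_def E_def W_def step_def q_def bind_assoc_pmf)
  also have "\<dots> = B \<bind> (\<lambda>m. E \<bind> (\<lambda>c. W m \<bind> step c))"
    by (intro bind_pmf_cong refl bind_commute_pmf)
  also have "\<dots> = B \<bind> (\<lambda>m. E \<bind> (\<lambda>c. W (of_bool c + m)))"
    by (intro bind_pmf_cong refl)
       (auto simp: step_def W_def binomial_diff_pmf_Suc bind_return_pmf bind_return_pmf')
  also have "\<dots> = E \<bind> (\<lambda>c. B \<bind> (\<lambda>m. W (of_bool c + m)))"
    by (rule bind_commute_pmf)
  also have "\<dots> = binomial_pmf (Suc n) q \<bind> W"
    unfolding binomial_pmf_Suc[OF q] B_def E_def
    by (simp add: bind_assoc_pmf bind_return_pmf of_bool_def)
  finally show ?case unfolding q_def W_def .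
qed

lemma pmf_binomial_diff_pmf_half_0:
  "pmf (binomial_diff_pmf n (1/2)) 0 = pochhammer (1/2) n / fact n"
proof -
  have "pmf (binomial_diff_pmf n (1/2)) 0 = (\<Sum>k\<le>n. (real (n choose k))\<^sup>2) / 4 ^ n"
  proof -
    have "pmf (binomial_diff_pmf n (1/2)) 0 =
          (\<Sum>k\<le>n. (real (n choose k) * (1/2) ^ k * (1/2) ^ (n - k))\<^sup>2)"
      unfolding binomial_diff_pmf_def pmf_bind
      by (simp add: expectation_binomial_pmf' indicator_def power2_eq_square)
    also have "\<dots> = (\<Sum>k\<le>n. (real (n choose k))\<^sup>2 * ((1/2) ^ n)\<^sup>2)"
      by (intro sum.cong refl) (simp add: power_mult_distrib power_add[symmetric] mult.assoc)
    also have "((1/2 :: real) ^ n)\<^sup>2 = 1 / 4 ^ n"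
      by (simp add: power_divide power_mult[symmetric] mult.commute[of n] power_mult)
    finally show ?thesis by (simp add: sum_divide_distrib)
  qed
  also have "\<dots> = real ((2 * n) choose n) / 4 ^ n"
    by (simp only: of_nat_power[symmetric] of_nat_sum[symmetric] choose_square_sum)
  also have "\<dots> = pochhammer (1/2) n / fact n"
  proof -
    have "fact (2 * n) = (4::real) ^ n * pochhammer (1/2) n * fact n"
      using pochhammer_double[of "1/2::real" n] by (simp add: pochhammer_fact[symmetric] power_mult)
    then show ?thesis by (simp add: binomial_fact field_simps)
  qed
  finally show ?thesis .
qed

lemma expectation_binomial_diff_pmf_half_abs:
  "measure_pmf.expectation (binomial_diff_pmf n (1/2)) (\<lambda>z. \<bar>real_of_int z\<bar>) =
     n * pochhammer (1/2) n / fact n"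
proof (induction n)
  case (Suc n)
  have "measure_pmf.expectation (binomial_diff_pmf (Suc n) (1/2)) (\<lambda>z. \<bar>real_of_int z\<bar>) =
        (n + 1/2) * pochhammer (1/2) n / fact n"
    by (simp add: expectation_binomial_diff_pmf_abs_Suc Suc.IH pmf_binomial_diff_pmf_half_0
        field_simps)
  also have "\<dots> = Suc n * pochhammer (1/2) (Suc n) / fact (Suc n)"
    by (simp add: pochhammer_Suc field_simps del: of_nat_Suc)
  finally show ?case .
qed (simp add: binomial_diff_pmf_0)

lemma expectation_binomial_diff_pmf_abs_mixture:
  assumes p: "p \<in> {0..1}"
  shows "measure_pmf.expectation (binomial_diff_pmf n p) (\<lambda>z. \<bar>real_of_int z\<bar>) =
     measure_pmf.expectation (binomial_pmf n (4 * p * (1 - p)))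
       (\<lambda>m. m * pochhammer (1/2) m / fact m)"
  using four_mult_mult_one_minus_in_unit[OF p]
  unfolding binomial_diff_pmf_mixture[OF p]
  by (subst expectation_bind_pmf_finite)
     (auto simp: finite_set_pmf_binomial_diff_pmf expectation_binomial_diff_pmf_half_abs)

lemma sqrt_mult_pochhammer_half_over_fact_tendsto:
  "(\<lambda>n. sqrt n * pochhammer (1/2) n / fact n) \<longlonglongrightarrow> 1 / sqrt pi"
proof -
  have "Gamma_series' (1/2) \<longlonglongrightarrow> sqrt pi"
    using Gamma_series'_LIMSEQ[of "1/2 :: real"] unfolding Gamma_one_half_real .
  then have "(\<lambda>n. inverse (Gamma_series' (1/2) n)) \<longlonglongrightarrow> 1 / sqrt pi"
    unfolding inverse_eq_divide[symmetric] by (rule tendsto_inverse) simp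
  moreover have "eventually (\<lambda>n. inverse (Gamma_series' (1/2) n) =
                   sqrt n * pochhammer (1/2) n / fact n) sequentially"
    using eventually_gt_at_top[of 0]
  proof eventually_elim
    case (elim n)
    have "exp (1/2 * ln (real n)) = sqrt n"
      using elim by (simp add: powr_half_sqrt[symmetric] powr_def)
    then have "inverse (Gamma_series' (1/2) n) = pochhammer (1/2) n / (fact (n - 1) * sqrt n)"
      by (simp add: Gamma_series'_def)
    also have "\<dots> = sqrt n * pochhammer (1/2) n / (sqrt n * (sqrt n * fact (n - 1)))"
      using elim by (simp add: mult.commute)
    also have "sqrt n * (sqrt n * fact (n - 1)) = (fact n :: real)"
      using elim by (simp add: fact_reduce[of n] mult.assoc[symmetric])
    finally show ?case .
  qed
  ultimately show ?thesis
    by (rule Lim_transform_eventually)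
qed

lemma expectation_sqrt_ratio_mult_tendsto_0:
  fixes M :: "nat \<Rightarrow> nat pmf" and u :: "nat \<Rightarrow> real"
  assumes u: "u \<longlonglongrightarrow> 0" and M: "\<And>r. set_pmf (M r) \<subseteq> {..r}"
  shows "(\<lambda>r. measure_pmf.expectation (M r) (\<lambda>n. sqrt (n / r) * u n)) \<longlonglongrightarrow> 0"
proof (rule tendstoI)
  fix e :: real assume e: "e > 0"
  obtain B where B: "\<And>n. \<bar>u n\<bar> \<le> B"
    using convergent_imp_Bseq[OF convergentI[OF u]] by (metis BseqE real_norm_def)
  obtain N where N: "\<And>n. n \<ge> N \<Longrightarrow> \<bar>u n\<bar> < e / 2"
    using LIMSEQ_D[OF u, of "e / 2"] e by auto
  \<comment> \<open>the finitely many exceptional values of \<open>u\<close> carry weight at most \<open>sqrt (N / r)\<close>\<close>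
  have "(\<lambda>r. B * sqrt (N / r)) \<longlonglongrightarrow> B * sqrt 0"
    by (intro tendsto_intros)
  then have "eventually (\<lambda>r. B * sqrt (N / r) < e / 2) sequentially"
    using e by (intro order_tendstoD) auto
  then show "eventually (\<lambda>r. dist (measure_pmf.expectation (M r) (\<lambda>n. sqrt (n / r) * u n)) 0 < e)
               sequentially"
  proof eventually_elim
    case (elim r)
    have "\<bar>sqrt (n / r) * u n\<bar> \<le> e / 2 + B * sqrt (N / r)" if "n \<in> set_pmf (M r)" for n
    proof (cases "n \<ge> N")
      case True
      have "n \<le> r" using M[of r] that by auto
      then have "sqrt (n / r) \<le> 1" by (cases "r = 0") (simp_all add: field_simps)
      then have "\<bar>sqrt (n / r) * u n\<bar> \<le> 1 * (e / 2)"
        unfolding abs_mult using N[OF True] by (intro mult_mono) auto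
      moreover have "0 \<le> B * sqrt (N / r)" using B[of 0] by simp
      ultimately show ?thesis by simp
    next
      case False
      have "\<bar>sqrt (n / r) * u n\<bar> \<le> sqrt (N / r) * B"
        using False B[of n] by (simp add: abs_mult mult_mono divide_right_mono)
      then show ?thesis using e by (simp add: mult.commute)
    qed
    then have "\<bar>measure_pmf.expectation (M r) (\<lambda>n. sqrt (n / r) * u n)\<bar> \<le> e / 2 + B * sqrt (N / r)"
      using M[of r] finite_subset
      by (intro abs_expectation_le_const_pmf integrable_measure_pmf_finite) auto
    then show ?case using elim by simp
  qed
qed

lemma abs_sqrt_diff_le:
  assumes a: "a \<ge> 0" and b: "b > 0"
  shows "\<bar>sqrt a - sqrt b\<bar> \<le> \<bar>a - b\<bar> / sqrt b"
proof -
  have "a - b = (sqrt a - sqrt b) * (sqrt a + sqrt b)"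
    using a b by (simp add: algebra_simps)
  then have "\<bar>a - b\<bar> = \<bar>sqrt a - sqrt b\<bar> * (sqrt a + sqrt b)"
    using a b by (simp add: abs_mult)
  also have "\<dots> \<ge> \<bar>sqrt a - sqrt b\<bar> * sqrt b"
    using a by (intro mult_left_mono) auto
  finally show ?thesis using b by (simp add: field_simps)
qed

lemma abs_expectation_binomial_sqrt_ratio_le:
  assumes g: "0 < g" "g \<le> 1" and r: "r > 0"
  shows "\<bar>measure_pmf.expectation (binomial_pmf r g) (\<lambda>n. sqrt (n / r)) - sqrt g\<bar> \<le>
           sqrt ((1 - g) / r)"
proof -
  have g01: "g \<in> {0..1}" using g by auto
  let ?E = "measure_pmf.expectation (binomial_pmf r g)"
  have "\<bar>?E (\<lambda>n. sqrt (n / r)) - sqrt g\<bar> = \<bar>?E (\<lambda>n. sqrt (n / r) - sqrt g)\<bar>"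
    using g01 by simp
  also have "\<dots> \<le> ?E (\<lambda>n. \<bar>sqrt (n / r) - sqrt g\<bar>)"
    by (rule integral_abs_bound)
  also have "\<dots> \<le> ?E (\<lambda>n. \<bar>real n - r * g\<bar> / (r * sqrt g))"
  proof (rule integral_mono)
    fix n :: nat
    have "\<bar>sqrt (n / r) - sqrt g\<bar> \<le> \<bar>n / r - g\<bar> / sqrt g"
      using g by (intro abs_sqrt_diff_le) auto
    also have "\<dots> = \<bar>real n - r * g\<bar> / (r * sqrt g)"
      using r by (simp add: field_simps abs_div)
    finally show "\<bar>sqrt (n / r) - sqrt g\<bar> \<le> \<bar>real n - r * g\<bar> / (r * sqrt g)" .
  qed (use g01 in auto)
  also have "\<dots> = ?E (\<lambda>n. \<bar>real n - r * g\<bar>) / (r * sqrt g)"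
    by simp
  also have "\<dots> \<le> sqrt (?E (\<lambda>n. (real n - r * g)\<^sup>2)) / (r * sqrt g)"
    using g01 by (intro divide_right_mono measure_pmf.expectation_abs_le_sqrt_expectation_square) auto
  also have "\<dots> = sqrt (r * g * (1 - g)) / (r * sqrt g)"
    unfolding expectation_binomial_pmf_square_deviation[OF g01] ..
  also have "\<dots> = sqrt r * sqrt (1 - g) / (sqrt r * sqrt r)"
    using g by (simp add: real_sqrt_mult)
  also have "\<dots> = sqrt (1 - g) / sqrt r"
    by (rule nonzero_mult_divide_mult_cancel_left) (use r in simp)
  also have "\<dots> = sqrt ((1 - g) / r)"
    by (simp add: real_sqrt_divide)
  finally show ?thesis .
qed

lemma expectation_binomial_sqrt_ratio_tendsto:
  assumes g: "0 < g" "g \<le> 1"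
  shows "(\<lambda>r. measure_pmf.expectation (binomial_pmf r g) (\<lambda>n. sqrt (n / r))) \<longlonglongrightarrow> sqrt g"
proof -
  have "(\<lambda>r. measure_pmf.expectation (binomial_pmf r g) (\<lambda>n. sqrt (n / r)) - sqrt g) \<longlonglongrightarrow> 0"
  proof (rule Lim_null_comparison)
    show "(\<lambda>r. sqrt ((1 - g) / r)) \<longlonglongrightarrow> 0"
      using tendsto_real_sqrt[OF lim_const_over_n[of "1 - g"]] by simp
    show "eventually (\<lambda>r. norm (measure_pmf.expectation (binomial_pmf r g) (\<lambda>n. sqrt (n / r)) - sqrt g)
            \<le> sqrt ((1 - g) / r)) sequentially"
      using eventually_gt_at_top[of 0]
      by eventually_elim (simp add: abs_expectation_binomial_sqrt_ratio_le[OF g])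
  qed
  then show ?thesis by (rule LIM_zero_cancel)
qed

lemma expectation_binomial_sqrt_ratio_mult_tendsto:
  assumes g: "0 < g" "g \<le> 1" and h: "h \<longlonglongrightarrow> c"
  shows "(\<lambda>r. measure_pmf.expectation (binomial_pmf r g) (\<lambda>n. sqrt (n / r) * h n))
           \<longlonglongrightarrow> c * sqrt g"
proof -
  have g01: "g \<in> {0..1}" using g by auto
  have "measure_pmf.expectation (binomial_pmf r g) (\<lambda>n. sqrt (n / r) * h n) =
        measure_pmf.expectation (binomial_pmf r g) (\<lambda>n. sqrt (n / r) * (h n - c)) +
        c * measure_pmf.expectation (binomial_pmf r g) (\<lambda>n. sqrt (n / r))" for r
    using g01 by (simp add: algebra_simps)
  moreover have "(\<lambda>r. measure_pmf.expectation (binomial_pmf r g) (\<lambda>n. sqrt (n / r) * (h n - c)) +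
        c * measure_pmf.expectation (binomial_pmf r g) (\<lambda>n. sqrt (n / r))) \<longlonglongrightarrow> 0 + c * sqrt g"
    using h g01
    by (intro tendsto_intros expectation_sqrt_ratio_mult_tendsto_0 set_pmf_binomial_pmf_subset
        expectation_binomial_sqrt_ratio_tendsto g) (simp add: LIM_zero)
  ultimately show ?thesis by simp
qed

lemma expectation_binomial_diff_pmf_abs_over_sqrt_tendsto:
  assumes p: "0 < p" "p < 1"
  shows "(\<lambda>r. measure_pmf.expectation (binomial_diff_pmf r p) (\<lambda>z. \<bar>real_of_int z\<bar>) / sqrt r)
           \<longlonglongrightarrow> 2 * sqrt (p * (1 - p) / pi)"
proof -
  define g where "g = 4 * p * (1 - p)"
  have p01: "p \<in> {0..1}" using p by auto
  have g: "0 < g" "g \<le> 1"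
    using p four_mult_mult_one_minus_in_unit[OF p01] by (auto simp: g_def)
  have "measure_pmf.expectation (binomial_diff_pmf r p) (\<lambda>z. \<bar>real_of_int z\<bar>) / sqrt r =
        measure_pmf.expectation (binomial_pmf r g)
          (\<lambda>m. sqrt (m / r) * (sqrt m * pochhammer (1/2) m / fact m))" for r
  proof -
    have "measure_pmf.expectation (binomial_diff_pmf r p) (\<lambda>z. \<bar>real_of_int z\<bar>) / sqrt r =
          measure_pmf.expectation (binomial_pmf r g) (\<lambda>m. m * pochhammer (1/2) m / fact m / sqrt r)"
      unfolding expectation_binomial_diff_pmf_abs_mixture[OF p01] g_def
      by (rule integral_divide_zero[symmetric])
    also have "\<dots> = measure_pmf.expectation (binomial_pmf r g)
          (\<lambda>m. sqrt (m / r) * (sqrt m * pochhammer (1/2) m / fact m))"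
      by (intro Bochner_Integration.integral_cong refl) (simp add: real_sqrt_divide field_simps)
    finally show ?thesis .
  qed
  moreover have "(\<lambda>r. measure_pmf.expectation (binomial_pmf r g)
          (\<lambda>m. sqrt (m / r) * (sqrt m * pochhammer (1/2) m / fact m)))
          \<longlonglongrightarrow> 1 / sqrt pi * sqrt g"
    using g sqrt_mult_pochhammer_half_over_fact_tendsto
    by (rule expectation_binomial_sqrt_ratio_mult_tendsto)
  moreover have "1 / sqrt pi * sqrt g = 2 * sqrt (p * (1 - p) / pi)"
    by (simp add: g_def real_sqrt_mult real_sqrt_divide)
  ultimately show ?thesis by simp
qed

(* The variable z carries the weight of the implicit last coordinate, 1 - l1norm d x in multinom. *)
definition multinomial_term ::
    "nat \<Rightarrow> nat \<Rightarrow> (nat \<Rightarrow> nat) \<Rightarrow> (nat \<Rightarrow> real) \<Rightarrow> real \<Rightarrow> real" where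
  "multinomial_term d r k y z =
     fact r / (fact (r - (\<Sum>i<d. k i)) * (\<Prod>i<d. fact (k i)))
     * z ^ (r - (\<Sum>i<d. k i)) * (\<Prod>i<d. y i ^ k i)"

lemma multinom_eq_multinomial_term: "multinom d r k x = multinomial_term d r k x (1 - l1norm d x)"
  by (simp add: multinom_def multinomial_term_def)

lemma lattice_pts_le: "k \<in> lattice_pts d r \<Longrightarrow> i < d \<Longrightarrow> k i \<le> r"
  using member_le_sum[of i "{..<d}" k] by (auto simp: lattice_pts_def)

lemma finite_lattice_pts: "finite (lattice_pts d r)"
proof -
  have "lattice_pts d r \<subseteq> (\<lambda>f i. if i < d then f i else 0) ` ({..<d} \<rightarrow>\<^sub>E {..r})"
  proof
    fix k assume k: "k \<in> lattice_pts d r"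
    then have "k = (\<lambda>i. if i < d then restrict k {..<d} i else 0)"
      by (auto simp: lattice_pts_def fun_eq_iff)
    moreover have "restrict k {..<d} \<in> {..<d} \<rightarrow>\<^sub>E {..r}"
      using k lattice_pts_le by auto
    ultimately show "k \<in> (\<lambda>f i. if i < d then f i else 0) ` ({..<d} \<rightarrow>\<^sub>E {..r})" by blast
  qed
  then show ?thesis by (rule finite_subset) (auto intro: finite_PiE)
qed

lemma lattice_pts_Suc_bij:
  "bij_betw (\<lambda>(m, k). k(d := m)) (SIGMA m:{..r}. lattice_pts d (r - m)) (lattice_pts (Suc d) r)"
proof (rule bij_betwI[where g = "\<lambda>k. (k d, k(d := 0))"])
  have sum_upd: "(\<Sum>i<d. (k(d := m)) i) = (\<Sum>i<d. k i)" for k :: "nat \<Rightarrow> nat" and m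
    by (intro sum.cong) auto
  show "(\<lambda>(m, k). k(d := m)) \<in> (SIGMA m:{..r}. lattice_pts d (r - m)) \<rightarrow> lattice_pts (Suc d) r"
    by (auto simp: lattice_pts_def sum_upd)
  show "(\<lambda>k. (k d, k(d := 0))) \<in> lattice_pts (Suc d) r \<rightarrow> (SIGMA m:{..r}. lattice_pts d (r - m))"
    by (auto simp: lattice_pts_def sum_upd)
qed (auto simp: lattice_pts_def)

lemma multinomial_term_Suc:
  assumes m: "m \<le> r" and k: "k \<in> lattice_pts d (r - m)"
  shows "multinomial_term (Suc d) r (k(d := m)) y z =
           real (r choose m) * y d ^ m * multinomial_term d (r - m) k y z"
proof -
  have sum_upd: "(\<Sum>i<d. (k(d := m)) i) = (\<Sum>i<d. k i)" by (intro sum.cong) auto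
  have "(\<Prod>i<d. fact ((k(d := m)) i)) = (\<Prod>i<d. fact (k i) :: real)"
       "(\<Prod>i<d. y i ^ (k(d := m)) i) = (\<Prod>i<d. y i ^ k i)"
    by (intro prod.cong; simp)+
  moreover have "(\<Sum>i<d. k i) \<le> r - m" using k by (simp add: lattice_pts_def)
  moreover have "real (r choose m) = fact r / (fact m * fact (r - m))" by (rule binomial_fact[OF m])
  ultimately show ?thesis
    unfolding multinomial_term_def using m by (simp add: sum_upd field_simps)
qed

theorem sum_multinomial_term:
  "(\<Sum>k\<in>lattice_pts d r. multinomial_term d r k y z) = (z + (\<Sum>i<d. y i)) ^ r"
proof (induction d arbitrary: r)
  case 0
  have "lattice_pts 0 r = {\<lambda>_. 0}" by (auto simp: lattice_pts_def)
  then show ?case by (simp add: multinomial_term_def)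
next
  case (Suc d)
  have "(\<Sum>k\<in>lattice_pts (Suc d) r. multinomial_term (Suc d) r k y z) =
        (\<Sum>(m, k)\<in>(SIGMA m:{..r}. lattice_pts d (r - m)).
           multinomial_term (Suc d) r (k(d := m)) y z)"
    using sum.reindex_bij_betw[OF lattice_pts_Suc_bij, of "\<lambda>k. multinomial_term (Suc d) r k y z"]
    by (simp add: case_prod_unfold)
  also have "\<dots> = (\<Sum>m\<le>r. real (r choose m) * y d ^ m *
                      (\<Sum>k\<in>lattice_pts d (r - m). multinomial_term d (r - m) k y z))"
    by (subst sum.Sigma[symmetric])
       (auto simp: finite_lattice_pts multinomial_term_Suc sum_distrib_left)
  also have "\<dots> = (y d + (z + (\<Sum>i<d. y i))) ^ r"
    by (simp add: Suc.IH binomial_ring)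
  finally show ?case by (simp add: algebra_simps)
qed

lemma sum_multinom_coordinate_eq:
  assumes i: "i < d" and x: "\<And>l. l < d \<Longrightarrow> 0 \<le> x l" and j: "j \<le> r"
  shows "(\<Sum>k | k \<in> lattice_pts d r \<and> k i = j. multinom d r k x) =
           real (r choose j) * x i ^ j * (1 - x i) ^ (r - j)"
proof -
  define z where "z = 1 - l1norm d x"
  define c where "c j = (\<Sum>k | k \<in> lattice_pts d r \<and> k i = j. multinomial_term d r k x z)" for j
  define e where "e j = real (r choose j) * x i ^ j * (1 - x i) ^ (r - j)" for j
  \<comment> \<open>scaling coordinate \<open>i\<close> by \<open>t\<close> marks the \<open>i\<close>-th exponent; compare coefficients in \<open>t\<close>\<close>
  have "(\<Sum>j\<le>r. c j * t ^ j) = (\<Sum>j\<le>r. e j * t ^ j)" for t :: real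
  proof -
    define y where "y = x(i := t * x i)"
    have prod_y: "(\<Prod>l<d. y l ^ k l) = t ^ k i * (\<Prod>l<d. x l ^ k l)" for k
    proof -
      have "(\<Prod>l<d. y l ^ k l) = (\<Prod>l<d. (if l = i then t ^ k i else 1) * x l ^ k l)"
        by (intro prod.cong) (auto simp: y_def power_mult_distrib)
      then show ?thesis by (simp add: prod.distrib i)
    qed
    have sum_y: "(\<Sum>l<d. y l) = (\<Sum>l<d. x l) + (t - 1) * x i"
    proof -
      have "(\<Sum>l<d. y l) = (\<Sum>l<d. x l + (if l = i then (t - 1) * x i else 0))"
        by (intro sum.cong) (auto simp: y_def algebra_simps)
      then show ?thesis by (simp add: sum.distrib i)
    qed
    have "(\<Sum>j\<le>r. c j * t ^ j) =
          (\<Sum>j\<le>r. \<Sum>k | k \<in> lattice_pts d r \<and> k i = j. t ^ k i * multinomial_term d r k x z)"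
      unfolding c_def by (simp add: sum_distrib_left mult.commute)
    also have "\<dots> = (\<Sum>k\<in>lattice_pts d r. t ^ k i * multinomial_term d r k x z)"
      by (rule sum.group) (use i lattice_pts_le in \<open>auto simp: finite_lattice_pts\<close>)
    also have "\<dots> = (\<Sum>k\<in>lattice_pts d r. multinomial_term d r k y z)"
      by (intro sum.cong refl) (simp add: multinomial_term_def prod_y)
    also have "\<dots> = (t * x i + (1 - x i)) ^ r"
      using x by (simp add: sum_multinomial_term sum_y z_def l1norm_def algebra_simps)
    also have "\<dots> = (\<Sum>j\<le>r. e j * t ^ j)"
      unfolding binomial_ring e_def by (intro sum.cong refl) (simp add: power_mult_distrib)
    finally show ?thesis .
  qed
  then have "c j = e j" using polyfun_eq_coeffs[of c r e] j by blast
  then show ?thesis by (simp add: c_def e_def z_def multinom_eq_multinomial_term)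
qed

lemma sum_lattice_pts_multinom_eq_expectation:
  assumes i: "i < d" and x: "x \<in> stdSimplex d"
  shows "(\<Sum>k\<in>lattice_pts d r. g (k i) * multinom d r k x) =
           measure_pmf.expectation (binomial_pmf r (x i)) g"
proof -
  have x_nonneg: "\<And>l. l < d \<Longrightarrow> 0 \<le> x l" and p: "x i \<in> {0..1}"
    using x i by (auto simp: stdSimplex_def)
  have "(\<Sum>k\<in>lattice_pts d r. g (k i) * multinom d r k x) =
        (\<Sum>j\<le>r. \<Sum>k | k \<in> lattice_pts d r \<and> k i = j. g (k i) * multinom d r k x)"
    by (rule sum.group[symmetric]) (use i lattice_pts_le in \<open>auto simp: finite_lattice_pts\<close>)
  also have "\<dots> = (\<Sum>j\<le>r. g j * (real (r choose j) * x i ^ j * (1 - x i) ^ (r - j)))"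
    by (intro sum.cong refl)
       (simp add: sum_distrib_left[symmetric] sum_multinom_coordinate_eq[OF i x_nonneg])
  also have "\<dots> = measure_pmf.expectation (binomial_pmf r (x i)) g"
    using p by (simp add: expectation_binomial_pmf' mult.commute)
  finally show ?thesis .
qed

lemma expectation_binomial_min:
  assumes p: "p \<in> {0..1}"
  shows "measure_pmf.expectation (binomial_pmf n p)
           (\<lambda>k. measure_pmf.expectation (binomial_pmf n p) (\<lambda>l. real (min k l))) =
         n * p - measure_pmf.expectation (binomial_diff_pmf n p) (\<lambda>z. \<bar>real_of_int z\<bar>) / 2"
proof -
  let ?E = "measure_pmf.expectation (binomial_pmf n p)"
  have inner: "?E (\<lambda>l. real (min k l)) = (real k + n * p - ?E (\<lambda>l. \<bar>real k - real l\<bar>)) / 2" for k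
  proof -
    have "?E (\<lambda>l. real (min k l)) = ?E (\<lambda>l. (real k + real l - \<bar>real k - real l\<bar>) / 2)"
      by (intro Bochner_Integration.integral_cong) auto
    also have "\<dots> = (real k + ?E real - ?E (\<lambda>l. \<bar>real k - real l\<bar>)) / 2"
      using p by simp
    finally show ?thesis by (simp add: expectation_binomial_pmf_mean[OF p])
  qed
  have "?E (\<lambda>k. ?E (\<lambda>l. real (min k l))) =
        ?E (\<lambda>k. (real k + n * p - ?E (\<lambda>l. \<bar>real k - real l\<bar>)) / 2)"
    by (simp only: inner)
  also have "\<dots> = (?E real + n * p - ?E (\<lambda>k. ?E (\<lambda>l. \<bar>real k - real l\<bar>))) / 2"
    using p by simp
  finally show ?thesis
    using p by (simp add: expectation_binomial_pmf_mean expectation_binomial_diff_pmf field_simps)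
qed

lemma Rfun_eq_expectation_binomial_diff_abs:
  assumes i: "i < d" and x: "x \<in> stdSimplex d"
  shows "Rfun d i r x =
           - measure_pmf.expectation (binomial_diff_pmf r (x i)) (\<lambda>z. \<bar>real_of_int z\<bar>) / (2 * sqrt r)"
proof (cases "r = 0")
  case False
  define p where "p = x i"
  have p: "p \<in> {0..1}" using x i by (auto simp: stdSimplex_def p_def)
  define F where "F a = (\<lambda>b. real (min a b) / r - p)" for a
  let ?E = "measure_pmf.expectation (binomial_pmf r p)"
  let ?D = "measure_pmf.expectation (binomial_diff_pmf r p) (\<lambda>z. \<bar>real_of_int z\<bar>)"
  have "(\<Sum>k\<in>lattice_pts d r. \<Sum>l\<in>lattice_pts d r.
           F (k i) (l i) * multinom d r k x * multinom d r l x) =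
        (\<Sum>k\<in>lattice_pts d r.
           (\<Sum>l\<in>lattice_pts d r. F (k i) (l i) * multinom d r l x) * multinom d r k x)"
    by (simp add: sum_distrib_left sum_distrib_right mult_ac)
  also have "\<dots> = (\<Sum>k\<in>lattice_pts d r. ?E (F (k i)) * multinom d r k x)"
    by (simp add: sum_lattice_pts_multinom_eq_expectation[OF i x] p_def)
  also have "\<dots> = ?E (\<lambda>a. ?E (F a))"
    using sum_lattice_pts_multinom_eq_expectation[OF i x, where g = "\<lambda>a. ?E (F a)"]
    by (simp add: p_def)
  also have "\<dots> = ?E (\<lambda>a. ?E (\<lambda>b. real (min a b))) / r - p"
    using p by (simp add: F_def)
  also have "\<dots> = - ?D / (2 * r)"
    using False by (simp add: expectation_binomial_min[OF p] field_simps)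
  finally have "Rfun d i r x = sqrt r * (- ?D / (2 * r))"
    by (simp add: Rfun_def F_def p_def)
  also have "\<dots> = - ?D / (2 * sqrt r)"
    using False by (simp add: field_simps flip: real_sqrt_mult_self[of r])
  finally show ?thesis unfolding p_def .
qed (simp add: Rfun_def)

lemma abs_Rfun_le_1:
  assumes i: "i < d" and x: "x \<in> stdSimplex d"
  shows "\<bar>Rfun d i r x\<bar> \<le> 1"
proof -
  have p: "x i \<in> {0..1}" using x i by (auto simp: stdSimplex_def)
  have "\<bar>Rfun d i r x\<bar> =
        measure_pmf.expectation (binomial_diff_pmf r (x i)) (\<lambda>z. \<bar>real_of_int z\<bar>) / (2 * sqrt r)"
    by (simp add: Rfun_eq_expectation_binomial_diff_abs[OF i x] abs_div)
  also have "\<dots> \<le> sqrt (r / 2) / (2 * sqrt r)"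
    using expectation_binomial_diff_pmf_abs_le[OF p] by (rule divide_right_mono) simp
  also have "\<dots> \<le> 1"
    by (cases "r = 0")
       (simp_all add: real_sqrt_divide field_simps order_trans[OF _ mult_left_mono[of 1 "sqrt 2" 2]])
  finally show ?thesis .
qed

lemma Rfun_tendsto:
  assumes i: "i < d" and x: "x \<in> simplexInt d"
  shows "(\<lambda>r. Rfun d i r x) \<longlonglongrightarrow> - sqrt (x i * (1 - x i) / pi)"
proof -
  have xs: "x \<in> stdSimplex d" and p: "0 < x i" "x i < 1"
    using x i by (auto simp: simplexInt_def stdSimplex_def less_imp_le)
  have "(\<lambda>r. - (measure_pmf.expectation (binomial_diff_pmf r (x i)) (\<lambda>z. \<bar>real_of_int z\<bar>) / sqrt r) / 2)
          \<longlonglongrightarrow> - (2 * sqrt (x i * (1 - x i) / pi)) / 2"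
    by (intro tendsto_intros expectation_binomial_diff_pmf_abs_over_sqrt_tendsto p) simp
  then show ?thesis
    by (simp add: Rfun_eq_expectation_binomial_diff_abs[OF i xs] mult.commute)
qed

theorem lemma4:
  fixes d :: nat
  assumes "d \<ge> 1"
  shows "(\<forall>i<d. \<forall>r\<ge>1. \<forall>x\<in>stdSimplex d. \<bar>Rfun d i r x\<bar> \<le> 1)
       \<and> (\<forall>x\<in>simplexInt d. \<forall>i<d.
            ((\<lambda>r. Rfun d i r x + sqrt (x i * (1 - x i) / pi)) \<longlongrightarrow> 0) sequentially)"
proof (intro conjI allI impI ballI)
  fix i r x assume "i < d" and "x \<in> stdSimplex d"
  then show "\<bar>Rfun d i r x\<bar> \<le> 1" by (rule abs_Rfun_le_1)
next
  fix x i assume "x \<in> simplexInt d" and "i < d"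
  then have "(\<lambda>r. Rfun d i r x) \<longlonglongrightarrow> - sqrt (x i * (1 - x i) / pi)"
    by (intro Rfun_tendsto)
  from tendsto_add[OF this tendsto_const[of "sqrt (x i * (1 - x i) / pi)"]]
  show "(\<lambda>r. Rfun d i r x + sqrt (x i * (1 - x i) / pi)) \<longlonglongrightarrow> 0"
    by simp
qed

end
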